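(* Let $S$ be a set, let $\mathcal{T}\subseteq \mathcal{P}(S)$ be a nonempty family containing a countable subfamily that separates points of $S$, and let $\mathcal{H}\subseteq\mathcal{P}(S)$ be a semiring. Then $\mathcal{C}(\mathcal{T})\subseteq\mathcal{C}(\mathcal{H})$ if and only if every element of $\mathcal{T}$ is a countable union of sets from $\mathcal{H}$.
   Context: $C(S)$ is the set of countable subsets of $S$; $N_A(M)=|A\cap M|$ for $A\subseteq S$, $M\in C(S)$; for nonempty $\mathcal{T}\subseteq\mathcal{P}(S)$, $\mathcal{C}(\mathcal{T})=\sigma(N_A\mid A\in\mathcal{T})$ (a $\sigma$-field on $C(S)$). A family $\mathcal{E}$ separates points of $S$ if for any distinct $x,y\in S$ there is $A\in\mathcal{E}$ with $1_A(x)\ne1_A(y)$. *)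

theory Defs
  imports "HOL-Analysis.Analysis"
begin

definition cntsets :: "'a set \<Rightarrow> 'a set set" where
  "cntsets S = {M. M \<subseteq> S \<and> countable M}"

definition Ncount :: "'a set \<Rightarrow> 'a set \<Rightarrow> enat" where
  "Ncount A M = (if finite (A \<inter> M) then enat (card (A \<inter> M)) else \<infinity>)"

text \<open>\<C>(\<T>) = \<sigma>(N_A | A \<in> \<T>) on C(S), with the discrete \<sigma>-field on the
  (countable) value space of extended naturals.\<close>
definition CC :: "'a set \<Rightarrow> 'a set set \<Rightarrow> 'a set set set" where
  "CC S T = sigma_sets (cntsets S)
     {{M \<in> cntsets S. Ncount A M \<in> B} | A B. A \<in> T}"

definition separates_points :: "'a set \<Rightarrow> 'a set set \<Rightarrow> bool" where
  "separates_points S E \<longleftrightarrow>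
     (\<forall>x\<in>S. \<forall>y\<in>S. x \<noteq> y \<longrightarrow> (\<exists>A\<in>E. (x \<in> A) \<noteq> (y \<in> A)))"

end

theory Submission
  imports Defs
begin

(*
  (\<Longleftarrow>) The maps N_D are \<C>(\<H>)-measurable for D \<in> \<H>; measurability is preserved under
  finite disjoint unions (N is additive) and under increasing countable unions (N is
  then a supremum).  A countable union of sets of \<H> is an increasing union of
  finite unions, which lie in the ring generated by \<H>, i.e. are finite disjoint
  unions of sets of \<H>.  Hence every N_A with A \<in> \<T> is \<C>(\<H>)-measurable.

  (\<Longrightarrow>) Every event of \<C>(\<H>) is determined by the counts N_B, B \<in> G, for a countable
  G \<subseteq> \<H>.  Applying this to the events {N_A = 0}, A \<in> \<T> \<union> E, yields a countable G \<subseteq> \<H>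
  separating the points of S such that whether A meets a countable M depends only on
  the counts of M on G.  An approximation argument then shows that every point of A
  lies in a "box" \<Inter>F1 - \<Union>F2 (F1, F2 finite subsets of G) contained in A.  There are
  countably many boxes, each a finite union of sets of \<H>, so A is a countable union
  of sets of \<H>.
*)


lemma Ncount_zero_iff: "Ncount A M = 0 \<longleftrightarrow> A \<inter> M = {}"
  unfolding Ncount_def by (auto simp: zero_enat_def)

lemma Ncount_infinite: "infinite (A \<inter> M) \<Longrightarrow> Ncount A M = \<infinity>"
  unfolding Ncount_def by auto

lemma Ncount_singleton: "Ncount B {x} = (if x \<in> B then 1 else 0)"
  unfolding Ncount_def by (simp add: one_enat_def zero_enat_def)

lemma Ncount_Un_disjoint:
  assumes "D \<inter> E = {}"
  shows "Ncount (D \<union> E) M = Ncount D M + Ncount E M"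
proof -
  have eq: "(D \<union> E) \<inter> M = (D \<inter> M) \<union> (E \<inter> M)" by blast
  have disj: "(D \<inter> M) \<inter> (E \<inter> M) = {}" using assms by blast
  show ?thesis
  proof (cases "finite (D \<inter> M) \<and> finite (E \<inter> M)")
    case True
    then show ?thesis unfolding Ncount_def eq using card_Un_disjoint[OF _ _ disj] by simp
  qed (auto simp: Ncount_def eq)
qed

lemma enat_le_Ncount_iff:
  "enat k \<le> Ncount D M \<longleftrightarrow> (\<exists>K. K \<subseteq> D \<inter> M \<and> finite K \<and> card K = k)"
proof (cases "finite (D \<inter> M)")
  case True
  have "k \<le> card (D \<inter> M) \<longleftrightarrow> (\<exists>K. K \<subseteq> D \<inter> M \<and> finite K \<and> card K = k)"
    using True by (metis card_mono finite_subset obtain_subset_with_card_n)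
  then show ?thesis using True unfolding Ncount_def by simp
next
  case False
  then show ?thesis using infinite_arbitrarily_large[OF False, of k] unfolding Ncount_def by auto
qed


section \<open>Events of \<open>\<C>(\<H>)\<close> depend on countably many counts\<close>

definition empty_event :: "'a set \<Rightarrow> 'a set \<Rightarrow> 'a set set" where
  "empty_event S A = {M \<in> cntsets S. A \<inter> M = {}}"

lemma empty_event_in_CC:
  assumes "A \<in> T"
  shows "empty_event S A \<in> CC S T"
proof -
  have "empty_event S A = {M \<in> cntsets S. Ncount A M \<in> {0}}"
    unfolding empty_event_def by (simp add: Ncount_zero_iff)
  then show ?thesis unfolding CC_def using assms by (intro sigma_sets.Basic) blast
qed

definition determined_by :: "'a set \<Rightarrow> 'a set set \<Rightarrow> 'a set set \<Rightarrow> bool" where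
  "determined_by S G X \<longleftrightarrow> (\<forall>M\<in>cntsets S. \<forall>M'\<in>cntsets S.
      (\<forall>B\<in>G. Ncount B M = Ncount B M') \<longrightarrow> (M \<in> X \<longleftrightarrow> M' \<in> X))"

lemma determined_byD:
  "determined_by S G X \<Longrightarrow> M \<in> cntsets S \<Longrightarrow> M' \<in> cntsets S \<Longrightarrow>
     (\<And>B. B \<in> G \<Longrightarrow> Ncount B M = Ncount B M') \<Longrightarrow> M \<in> X \<longleftrightarrow> M' \<in> X"
  unfolding determined_by_def by blast

lemma determined_by_mono: "determined_by S G X \<Longrightarrow> G \<subseteq> G' \<Longrightarrow> determined_by S G' X"
  unfolding determined_by_def by blast

text \<open>The determined events form a \<sigma>-field containing the generators, and the
  determining families can be collected countably; hence:\<close>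
lemma CC_determined:
  assumes "X \<in> CC S H"
  shows "\<exists>G. countable G \<and> G \<subseteq> H \<and> determined_by S G X"
  using assms unfolding CC_def
proof (induction rule: sigma_sets.induct)
  case (Basic X)
  then obtain A B where X: "X = {M \<in> cntsets S. Ncount A M \<in> B}" and "A \<in> H" by blast
  then have "determined_by S {A} X" unfolding determined_by_def by simp
  with \<open>A \<in> H\<close> show ?case by (intro exI[of _ "{A}"]) simp
next
  case Empty
  have "determined_by S {} {}" unfolding determined_by_def by simp
  then show ?case by (intro exI[of _ "{}"]) simp
next
  case (Compl X)
  then obtain G where G: "countable G" "G \<subseteq> H" "determined_by S G X" by blast
  then have "determined_by S G (cntsets S - X)" unfolding determined_by_def by blast
  with G show ?case by (intro exI[of _ G]) simp
next
  case (Union X)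
  then have "\<forall>i. \<exists>G. countable G \<and> G \<subseteq> H \<and> determined_by S G (X i)" by blast
  then obtain G where G: "\<forall>i. countable (G i) \<and> G i \<subseteq> H \<and> determined_by S (G i) (X i)"
    by (rule choice[THEN exE])
  have "determined_by S (\<Union>i. G i) (\<Union>i. X i)" unfolding determined_by_def
  proof (intro ballI impI)
    fix M M' assume MM': "M \<in> cntsets S" "M' \<in> cntsets S"
      and same: "\<forall>B\<in>(\<Union>i. G i). Ncount B M = Ncount B M'"
    have "M \<in> X i \<longleftrightarrow> M' \<in> X i" for i
      using G same by (intro determined_byD[OF _ MM', of "G i"]) auto
    then show "M \<in> (\<Union>i. X i) \<longleftrightarrow> M' \<in> (\<Union>i. X i)" by blast
  qed
  moreover have "countable (\<Union>i. G i)" "(\<Union>i. G i) \<subseteq> H" using G by auto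
  ultimately show ?case by (intro exI[of _ "\<Union>i. G i"]) simp
qed

lemma separates_pointsD:
  "separates_points S E \<Longrightarrow> x \<in> S \<Longrightarrow> y \<in> S \<Longrightarrow> x \<noteq> y \<Longrightarrow> \<exists>A\<in>E. (x \<in> A) \<noteq> (y \<in> A)"
  unfolding separates_points_def by blast

text \<open>If the events {N_e = 0} for a separating family E are all determined by G,
  then G itself separates points (test with singletons).\<close>
lemma separates_points_if_determined:
  assumes "separates_points S E" and "\<And>e. e \<in> E \<Longrightarrow> determined_by S G (empty_event S e)"
  shows "separates_points S G"
  unfolding separates_points_def
proof (intro ballI impI; rule ccontr)
  fix x y assume xy: "x \<in> S" "y \<in> S" "x \<noteq> y" and "\<not> (\<exists>B\<in>G. (x \<in> B) \<noteq> (y \<in> B))"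
  then have same: "Ncount B {x} = Ncount B {y}" if "B \<in> G" for B
    using that by (auto simp: Ncount_singleton)
  obtain e where e: "e \<in> E" "(x \<in> e) \<noteq> (y \<in> e)"
    using separates_pointsD[OF assms(1) xy] by blast
  have sing: "{x} \<in> cntsets S" "{y} \<in> cntsets S" using xy by (auto simp: cntsets_def)
  then have "{x} \<in> empty_event S e \<longleftrightarrow> {y} \<in> empty_event S e"
    using determined_byD[OF assms(2)[OF e(1)]] same by blast
  then show False using e(2) sing unfolding empty_event_def by auto
qed


section \<open>Determined emptiness forces A to be a union of boxes\<close>

text \<open>If G determines whether a countable set meets A, every point of A lies in some
  set of G (compare the empty set with {x}).\<close>
lemma point_in_generator:
  assumes "determined_by S G (empty_event S A)" "x \<in> A" "A \<subseteq> S"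
  shows "\<exists>B\<in>G. x \<in> B"
proof (rule ccontr)
  assume "\<not> ?thesis"
  then have "Ncount B {} = Ncount B {x}" if "B \<in> G" for B
    using that by (simp add: Ncount_singleton Ncount_def zero_enat_def)
  moreover have sing: "{} \<in> cntsets S" "{x} \<in> cntsets S" using assms by (auto simp: cntsets_def)
  ultimately have "{} \<in> empty_event S A \<longleftrightarrow> {x} \<in> empty_event S A"
    by (intro determined_byD[OF assms(1)])
  then show False using assms(2) sing unfolding empty_event_def by auto
qed

text \<open>Let g enumerate a separating family and let y n be points different from x
  that agree with x on g 0, ..., g n.  Then every g k containing x contains
  infinitely many of the y n: otherwise some value y n0 recurs for arbitrarily large
  n, so it agrees with x on all of G and equals x.\<close>
lemma agreeing_sequence_meets_infinitely:
  fixes g :: "nat \<Rightarrow> 'a set" and y :: "nat \<Rightarrow> 'a"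
  assumes sep: "separates_points S (range g)" and "x \<in> S" "range y \<subseteq> S"
    and y_ne: "\<And>n. y n \<noteq> x"
    and agree: "\<And>i n. i \<le> n \<Longrightarrow> y n \<in> g i \<longleftrightarrow> x \<in> g i"
    and "x \<in> g k"
  shows "infinite (g k \<inter> range y)"
proof
  assume "finite (g k \<inter> range y)"
  moreover have "y ` {k..} \<subseteq> g k \<inter> range y"
    using agree \<open>x \<in> g k\<close> by (intro image_subsetI IntI) simp_all
  ultimately have "finite (y ` {k..})" by (rule finite_subset[rotated])
  then obtain n0 where recur: "infinite {n \<in> {k..}. y n = y n0}"
    using pigeonhole_infinite[OF infinite_Ici[of k]] by blast
  have agree_all: "y n0 \<in> g j \<longleftrightarrow> x \<in> g j" for j
  proof -
    obtain n where "n \<ge> j" "y n = y n0"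
      using recur unfolding infinite_nat_iff_unbounded_le by blast
    then show ?thesis using agree[of j n] by simp
  qed
  have "y n0 \<in> S" using \<open>range y \<subseteq> S\<close> by blast
  then obtain B where "B \<in> range g" "(y n0 \<in> B) \<noteq> (x \<in> B)"
    using separates_pointsD[OF sep _ \<open>x \<in> S\<close> y_ne[of n0]] by blast
  then show False using agree_all by blast
qed

text \<open>Consequently, adding x to the range of such a sequence changes none of its
  counts on the sets g k: those not containing x are unaffected, and on those
  containing x both counts are infinite.\<close>
lemma agreeing_sequence_same_counts:
  fixes g :: "nat \<Rightarrow> 'a set" and y :: "nat \<Rightarrow> 'a"
  assumes sep: "separates_points S (range g)" and "x \<in> S" "range y \<subseteq> S"
    and y_ne: "\<And>n. y n \<noteq> x"
    and agree: "\<And>i n. i \<le> n \<Longrightarrow> y n \<in> g i \<longleftrightarrow> x \<in> g i"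
  shows "Ncount (g k) (range y) = Ncount (g k) (insert x (range y))"
proof (cases "x \<in> g k")
  case True
  have "infinite (g k \<inter> range y)"
    using agreeing_sequence_meets_infinitely[of S g x y k] sep \<open>x \<in> S\<close> \<open>range y \<subseteq> S\<close>
      y_ne agree True by blast
  moreover have "g k \<inter> range y \<subseteq> g k \<inter> insert x (range y)" by blast
  ultimately show ?thesis by (metis Ncount_infinite finite_subset)
qed (simp add: Ncount_def)

definition boxes :: "'a set set \<Rightarrow> 'a set set" where
  "boxes G = {\<Inter>F1 - \<Union>F2 | F1 F2. finite F1 \<and> finite F2 \<and> F1 \<subseteq> G \<and> F2 \<subseteq> G \<and> F1 \<noteq> {}}"

lemma countable_boxes:
  assumes "countable G"
  shows "countable (boxes G)"
proof -
  let ?Fin = "{F. finite F \<and> F \<subseteq> G}"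
  have "boxes G \<subseteq> (\<lambda>(F1, F2). \<Inter>F1 - \<Union>F2) ` (?Fin \<times> ?Fin)"
    unfolding boxes_def by auto
  moreover have "countable (?Fin \<times> ?Fin)"
    using countable_Collect_finite_subset[OF assms] by (intro countable_SIGMA)
  ultimately show ?thesis by (rule countable_subset[OF _ countable_image])
qed

text \<open>The key step: each point of A lies in a box contained in A.  Otherwise,
  enumerating G as g, the box cut out by g 0, ..., g n around x contains a point
  y n outside A.  Then range y misses A while insert x (range y) meets it, yet by
  agreeing_sequence_same_counts both have the same counts on G.\<close>
lemma point_in_box:
  assumes "countable G" "G \<subseteq> Pow S" "separates_points S G"
    and det: "determined_by S G (empty_event S A)" and "A \<subseteq> S" "x \<in> A"
  shows "\<exists>b\<in>boxes G. x \<in> b \<and> b \<subseteq> A"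
proof (rule ccontr)
  assume no_box: "\<not> ?thesis"
  have "x \<in> S" using assms by blast
  obtain B0 where B0: "B0 \<in> G" "x \<in> B0" using point_in_generator[OF det \<open>x \<in> A\<close> \<open>A \<subseteq> S\<close>] ..
  define g where "g = from_nat_into G"
  have range_g: "range g = G"
    unfolding g_def using B0 \<open>countable G\<close> by (intro range_from_nat_into) auto
  define box where "box n = \<Inter>(insert B0 (g ` {i. i \<le> n \<and> x \<in> g i})) - \<Union>(g ` {i. i \<le> n \<and> x \<notin> g i})"
    for n
  have "box n \<in> boxes G" for n
    unfolding boxes_def box_def using B0 range_g
    by (intro CollectI exI[of _ "insert B0 (g ` {i. i \<le> n \<and> x \<in> g i})"]
        exI[of _ "g ` {i. i \<le> n \<and> x \<notin> g i}"]) auto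
  moreover have "x \<in> box n" for n unfolding box_def using B0 by auto
  ultimately
  have "\<exists>z. z \<in> box n \<and> z \<notin> A" for n using no_box by blast
  then obtain y where y: "\<And>n. y n \<in> box n" "\<And>n. y n \<notin> A" by metis
  have agree: "i \<le> n \<Longrightarrow> y n \<in> g i \<longleftrightarrow> x \<in> g i" for i n
    using y(1)[of n] unfolding box_def by auto
  have "range y \<subseteq> S" using y(1) B0 \<open>G \<subseteq> Pow S\<close> unfolding box_def by blast
  have y_ne: "y n \<noteq> x" for n using y(2) \<open>x \<in> A\<close> by blast
  have "separates_points S (range g)" using range_g \<open>separates_points S G\<close> by simp
  from agreeing_sequence_same_counts[of S g x y, OF this \<open>x \<in> S\<close> \<open>range y \<subseteq> S\<close> y_ne agree]
  have "Ncount B (range y) = Ncount B (insert x (range y))" if "B \<in> G" for B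
    using that range_g by blast
  moreover have "range y \<in> cntsets S" "insert x (range y) \<in> cntsets S"
    using \<open>range y \<subseteq> S\<close> \<open>x \<in> S\<close> by (auto simp: cntsets_def)
  ultimately have "range y \<in> empty_event S A \<longleftrightarrow> insert x (range y) \<in> empty_event S A"
    by (intro determined_byD[OF det])
  moreover have "A \<inter> range y = {}" using y(2) by blast
  ultimately show False using \<open>x \<in> A\<close> \<open>range y \<in> cntsets S\<close> unfolding empty_event_def by blast
qed

context semiring_of_sets
begin

lemma boxes_in_generated_ring:
  assumes "G \<subseteq> M"
  shows "boxes G \<subseteq> generated_ring"
proof
  fix b assume "b \<in> boxes G"
  then obtain F1 F2 where b: "b = \<Inter>F1 - \<Union>F2" and F: "finite F1" "finite F2" "F1 \<subseteq> G"
    "F2 \<subseteq> G" "F1 \<noteq> {}" unfolding boxes_def by blast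
  interpret R: ring_of_sets \<Omega> generated_ring by (rule generating_ring)
  have "F1 \<subseteq> generated_ring" "F2 \<subseteq> generated_ring"
    using F(3,4) assms generated_ringI_Basic by blast+
  then have "\<Inter>F1 \<in> generated_ring" "\<Union>F2 \<in> generated_ring"
    using F(1,2,5) by (simp_all add: generated_ring_Inter R.finite_Union)
  then show "b \<in> generated_ring" unfolding b by (intro R.Diff)
qed

lemma Union_generated_ring_countable:
  assumes "countable R" "R \<subseteq> generated_ring"
  shows "\<exists>F. countable F \<and> F \<subseteq> M \<and> \<Union>R = \<Union>F"
proof -
  have "\<exists>C. finite C \<and> C \<subseteq> M \<and> r = \<Union>C" if "r \<in> R" for r
  proof -
    obtain C where "finite C" "disjoint C" "C \<subseteq> M" "r = \<Union>C"
      using generated_ringE \<open>r \<in> R\<close> assms(2) by blast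
    then show ?thesis by blast
  qed
  then obtain C where C: "\<And>r. r \<in> R \<Longrightarrow> finite (C r) \<and> C r \<subseteq> M \<and> r = \<Union>(C r)"
    by metis
  show ?thesis
  proof (intro exI conjI)
    show "countable (\<Union>(C ` R))"
      using C by (intro countable_UN[OF assms(1)] countable_finite) simp
    show "\<Union>(C ` R) \<subseteq> M" using C by blast
    have "\<Union>(\<Union>(C ` R)) = (\<Union>r\<in>R. \<Union>(C r))" by blast
    also have "\<dots> = \<Union>R" using C by simp
    finally show "\<Union>R = \<Union>(\<Union>(C ` R))" by simp
  qed
qed

text \<open>If a countable separating G \<subseteq> M determines whether a countable set meets A,
  then A is a countable union of sets of M, namely of the boxes inside A.\<close>
lemma countable_Union_if_determined:
  assumes "countable G" "G \<subseteq> M" "separates_points \<Omega> G"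
    and "determined_by \<Omega> G (empty_event \<Omega> A)" "A \<subseteq> \<Omega>"
  shows "\<exists>F. countable F \<and> F \<subseteq> M \<and> A = \<Union>F"
proof -
  define R where "R = {b \<in> boxes G. b \<subseteq> A}"
  have "G \<subseteq> Pow \<Omega>" using assms(2) sets_into_space by blast
  have "A \<subseteq> \<Union>R"
  proof
    fix x assume "x \<in> A"
    then obtain b where "b \<in> boxes G" "x \<in> b" "b \<subseteq> A"
      using point_in_box[OF assms(1) \<open>G \<subseteq> Pow \<Omega>\<close> assms(3-5)] by blast
    then show "x \<in> \<Union>R" unfolding R_def by blast
  qed
  then have A_eq: "A = \<Union>R" unfolding R_def by blast
  have "R \<subseteq> boxes G" unfolding R_def by blast
  then have "countable R" "R \<subseteq> generated_ring"
    using countable_subset countable_boxes[OF assms(1)] boxes_in_generated_ring[OF assms(2)]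
    by blast+
  from Union_generated_ring_countable[OF this] obtain F
    where F: "countable F \<and> F \<subseteq> M \<and> \<Union>R = \<Union>F" ..
  with A_eq show ?thesis by auto
qed


text \<open>Collect determining families for the events {N_A = 0} and {N_e = 0},
  e \<in> E, into one countable G \<subseteq> M; it separates points since E does.\<close>
lemma countable_Union_if_CC_subset:
  assumes incl: "CC \<Omega> T \<subseteq> CC \<Omega> M"
    and E: "E \<subseteq> T" "countable E" "separates_points \<Omega> E"
    and "A \<in> T" "A \<subseteq> \<Omega>"
  shows "\<exists>F. countable F \<and> F \<subseteq> M \<and> A = \<Union>F"
proof -
  have "\<exists>G. countable G \<and> G \<subseteq> M \<and> determined_by \<Omega> G (empty_event \<Omega> A')"
    if "A' \<in> insert A E" for A'
  proof -
    have "A' \<in> T" using that E(1) \<open>A \<in> T\<close> by blast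
    then show ?thesis by (rule CC_determined[OF subsetD[OF incl empty_event_in_CC]])
  qed
  then have "\<forall>A'\<in>insert A E. \<exists>G. countable G \<and> G \<subseteq> M \<and> determined_by \<Omega> G (empty_event \<Omega> A')"
    by (intro ballI)
  then obtain Gf where Gf: "\<forall>A'\<in>insert A E. countable (Gf A') \<and> Gf A' \<subseteq> M \<and>
      determined_by \<Omega> (Gf A') (empty_event \<Omega> A')" by (rule bchoice[THEN exE])
  define G where "G = (\<Union>A'\<in>insert A E. Gf A')"
  have det: "determined_by \<Omega> G (empty_event \<Omega> A')" if "A' \<in> insert A E" for A'
  proof (rule determined_by_mono)
    show "determined_by \<Omega> (Gf A') (empty_event \<Omega> A')" using Gf that by blast
    show "Gf A' \<subseteq> G" unfolding G_def using that by blast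
  qed
  have "countable G" unfolding G_def using Gf E(2) by (intro countable_UN) auto
  moreover have "G \<subseteq> M" unfolding G_def using Gf by blast
  moreover have "separates_points \<Omega> G" using separates_points_if_determined[OF E(3)] det by blast
  ultimately show ?thesis
    by (rule countable_Union_if_determined[OF _ _ _ det[OF insertI1] \<open>A \<subseteq> \<Omega>\<close>])
qed

end


section \<open>Measurability of counts of countable unions\<close>

definition count_events :: "'a set \<Rightarrow> 'a set set \<Rightarrow> 'a set set set" where
  "count_events S H = {{M \<in> cntsets S. Ncount A M \<in> B} | A B. A \<in> H}"

definition count_measure :: "'a set \<Rightarrow> 'a set set \<Rightarrow> 'a set measure" where
  "count_measure S H = sigma (cntsets S) (count_events S H)"

lemma count_events_Pow: "count_events S H \<subseteq> Pow (cntsets S)"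
  unfolding count_events_def by auto

lemma sets_count_measure: "sets (count_measure S H) = CC S H"
  unfolding count_measure_def CC_def count_events_def[symmetric]
  by (rule sets_measure_of[OF count_events_Pow])

lemma space_count_measure: "space (count_measure S H) = cntsets S"
  unfolding count_measure_def by (rule space_measure_of[OF count_events_Pow])

lemma measurable_Ncount_generator:
  assumes "D \<in> H"
  shows "Ncount D \<in> count_measure S H \<rightarrow>\<^sub>M count_space UNIV"
proof (rule measurableI)
  fix B :: "enat set"
  have "Ncount D -` B \<inter> space (count_measure S H) \<in> count_events S H"
    unfolding space_count_measure count_events_def using assms by blast
  then show "Ncount D -` B \<inter> space (count_measure S H) \<in> sets (count_measure S H)"
    unfolding sets_count_measure CC_def count_events_def[symmetric] by (rule sigma_sets.Basic)
qed simp

lemma measurable_Ncount_empty: "Ncount {} \<in> count_measure S H \<rightarrow>\<^sub>M count_space UNIV"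
proof -
  have zero: "Ncount {} = (\<lambda>M. 0)" by (rule ext) (simp add: Ncount_def zero_enat_def)
  show ?thesis unfolding zero by (rule measurable_const) simp
qed

text \<open>Additivity: the count of a disjoint union is the sum of the counts, and
  addition on the countable type enat is measurable.\<close>
lemma measurable_Ncount_Un:
  assumes "Ncount D \<in> count_measure S H \<rightarrow>\<^sub>M count_space UNIV"
    and "Ncount E \<in> count_measure S H \<rightarrow>\<^sub>M count_space UNIV" and "D \<inter> E = {}"
  shows "Ncount (D \<union> E) \<in> count_measure S H \<rightarrow>\<^sub>M count_space UNIV"
proof -
  have "(\<lambda>M. (Ncount D M, Ncount E M)) \<in> count_measure S H \<rightarrow>\<^sub>M count_space UNIV"
    using measurable_Pair[OF assms(1,2)]
    by (simp add: pair_measure_countable[OF countableI_type countableI_type])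
  then have "(\<lambda>M. case_prod (+) (Ncount D M, Ncount E M)) \<in> count_measure S H \<rightarrow>\<^sub>M count_space UNIV"
    by (rule measurable_compose[OF _ measurable_count_space])
  moreover have "Ncount (D \<union> E) = (\<lambda>M. Ncount D M + Ncount E M)"
    using Ncount_Un_disjoint[OF assms(3)] by (intro ext) simp
  ultimately show ?thesis by simp
qed

lemma measurable_Ncount_disjoint_Union:
  assumes "finite C" "disjoint C" "C \<subseteq> H"
  shows "Ncount (\<Union>C) \<in> count_measure S H \<rightarrow>\<^sub>M count_space UNIV"
  using assms
proof (induction C rule: finite_induct)
  case empty
  then show ?case using measurable_Ncount_empty by simp
next
  case (insert c C)
  have "c \<inter> \<Union>C = {}" using insert.prems(1) insert.hyps(2)
    by (auto simp: pairwise_insert disjnt_def)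
  moreover have "disjoint C" using insert.prems(1) by (simp add: pairwise_insert)
  ultimately show ?case
    using insert measurable_Ncount_generator[of c H S] by (simp add: measurable_Ncount_Un)
qed

lemma finite_subset_incseq_Union:
  assumes "incseq A" "finite K" "K \<subseteq> (\<Union>n. A n)"
  shows "\<exists>n. K \<subseteq> A n"
  using assms(2,3)
proof (induction K rule: finite_induct)
  case (insert x K)
  then obtain n m where "K \<subseteq> A n" "x \<in> A m" by blast
  moreover have "A n \<subseteq> A (max n m)" "A m \<subseteq> A (max n m)"
    using assms(1) unfolding incseq_def by simp_all
  ultimately show ?case by blast
qed simp

text \<open>Along an increasing union, a count reaches k as soon as some member's count does,
  since a finite set of k points lies in a single member.\<close>
lemma enat_le_Ncount_incseq:
  assumes "incseq A"
  shows "enat k \<le> Ncount (\<Union>n. A n) M \<longleftrightarrow> (\<exists>n. enat k \<le> Ncount (A n) M)"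
proof
  assume "enat k \<le> Ncount (\<Union>n. A n) M"
  then obtain K where K: "K \<subseteq> (\<Union>n. A n) \<inter> M" "finite K" "card K = k"
    unfolding enat_le_Ncount_iff by blast
  then obtain n where "K \<subseteq> A n" using finite_subset_incseq_Union[OF assms] by blast
  then show "\<exists>n. enat k \<le> Ncount (A n) M" unfolding enat_le_Ncount_iff using K by blast
next
  assume "\<exists>n. enat k \<le> Ncount (A n) M"
  then show "enat k \<le> Ncount (\<Union>n. A n) M" unfolding enat_le_Ncount_iff by blast
qed

text \<open>Measurability passes to increasing unions: each level set {N \<ge> k} of the union
  is a countable union of level sets of its members, and every fibre of an enat-valued
  map is obtained from these level sets.\<close>
lemma measurable_Ncount_incseq:
  assumes inc: "incseq A" and meas: "\<And>n. Ncount (A n) \<in> count_measure S H \<rightarrow>\<^sub>M count_space UNIV"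
  shows "Ncount (\<Union>n. A n) \<in> count_measure S H \<rightarrow>\<^sub>M count_space UNIV"
proof -
  let ?\<Omega> = "space (count_measure S H)"
  define L where "L k = {M \<in> ?\<Omega>. enat k \<le> Ncount (\<Union>n. A n) M}" for k
  have L: "L k \<in> sets (count_measure S H)" for k
  proof -
    have "L k = (\<Union>n. Ncount (A n) -` {enat k..} \<inter> ?\<Omega>)"
      unfolding L_def enat_le_Ncount_incseq[OF inc] by auto
    also have "\<dots> \<in> sets (count_measure S H)"
      using meas by (intro sets.countable_UN) (auto intro: measurable_sets)
    finally show ?thesis .
  qed
  have fibre: "Ncount (\<Union>n. A n) -` {a} \<inter> ?\<Omega> \<in> sets (count_measure S H)" for a
  proof (cases a)
    case (enat k)
    have "x = enat k \<longleftrightarrow> enat k \<le> x \<and> \<not> enat (Suc k) \<le> x" for x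
      by (cases x) auto
    then have "Ncount (\<Union>n. A n) -` {a} \<inter> ?\<Omega> = L k - L (Suc k)"
      unfolding L_def enat by blast
    then show ?thesis using L by auto
  next
    case infinity
    have "x = \<infinity> \<longleftrightarrow> (\<forall>k. enat k \<le> x)" for x :: enat
    proof (cases x)
      case (enat m)
      then have "\<not> enat (Suc m) \<le> x" by simp
      then show ?thesis using enat by blast
    qed simp
    then have "Ncount (\<Union>n. A n) -` {a} \<inter> ?\<Omega> = (\<Inter>k. L k)"
      unfolding L_def infinity by blast
    then show ?thesis using L by auto
  qed
  show ?thesis
    unfolding measurable_count_space_eq_countable[OF countableI_type] using fibre by simp
qed

text \<open>Counts of countable unions of sets of a semiring are \<C>(\<H>)-measurable: write
  the union as the increasing union of its finite partial unions, which lie in the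
  generated ring and are therefore finite disjoint unions of sets of \<H>.\<close>
lemma (in semiring_of_sets) measurable_Ncount_countable_Union:
  assumes "countable F" "F \<subseteq> M"
  shows "Ncount (\<Union>F) \<in> count_measure \<Omega> M \<rightarrow>\<^sub>M count_space UNIV"
proof (cases "F = {}")
  case True
  then show ?thesis using measurable_Ncount_empty by simp
next
  case False
  interpret R: ring_of_sets \<Omega> generated_ring by (rule generating_ring)
  define g where "g = from_nat_into F"
  have range_g: "range g = F" unfolding g_def by (rule range_from_nat_into[OF False assms(1)])
  define U where "U n = \<Union>(g ` {..<n})" for n
  have "incseq U" unfolding U_def incseq_def by (intro allI impI UN_mono) auto
  moreover have "Ncount (U n) \<in> count_measure \<Omega> M \<rightarrow>\<^sub>M count_space UNIV" for n
  proof -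
    have "U n \<in> generated_ring"
      unfolding U_def using range_g assms(2) generated_ringI_Basic by (intro R.finite_Union) auto
    then obtain C where "finite C" "disjoint C" "C \<subseteq> M" "U n = \<Union>C" by (rule generated_ringE)
    then show ?thesis using measurable_Ncount_disjoint_Union[of C M \<Omega>] by simp
  qed
  moreover have "(\<Union>n. U n) = \<Union>F" unfolding U_def range_g[symmetric] by auto
  ultimately show ?thesis using measurable_Ncount_incseq[of U \<Omega> M] by simp
qed

lemma CC_subset_if_measurable:
  assumes "\<And>A. A \<in> T \<Longrightarrow> Ncount A \<in> count_measure S H \<rightarrow>\<^sub>M count_space UNIV"
  shows "CC S T \<subseteq> CC S H"
proof -
  have "count_events S T \<subseteq> sets (count_measure S H)"
  proof
    fix Y assume "Y \<in> count_events S T"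
    then obtain A B where Y: "Y = {M \<in> cntsets S. Ncount A M \<in> B}" "A \<in> T"
      unfolding count_events_def by blast
    then have "Ncount A -` B \<inter> space (count_measure S H) \<in> sets (count_measure S H)"
      using assms by (intro measurable_sets) auto
    then show "Y \<in> sets (count_measure S H)" unfolding Y space_count_measure by (simp add: Int_def conj_commute)
  qed
  then show ?thesis
    using sets.sigma_sets_subset[of "count_events S T" "count_measure S H"]
    unfolding space_count_measure sets_count_measure CC_def count_events_def by blast
qed


theorem theorem3p5:
  fixes S :: "'a set" and T H :: "'a set set"
  assumes "T \<noteq> {}" and "T \<subseteq> Pow S"
    and "\<exists>E\<subseteq>T. countable E \<and> separates_points S E"
    and "semiring_of_sets S H"
  shows "CC S T \<subseteq> CC S H \<longleftrightarrow>
         (\<forall>A\<in>T. \<exists>F. countable F \<and> F \<subseteq> H \<and> A = \<Union>F)"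
proof
  interpret semiring_of_sets S H by (rule assms(4))
  obtain E where E: "E \<subseteq> T" "countable E" "separates_points S E" using assms(3) by blast
  assume incl: "CC S T \<subseteq> CC S H"
  show "\<forall>A\<in>T. \<exists>F. countable F \<and> F \<subseteq> H \<and> A = \<Union>F"
  proof
    fix A assume "A \<in> T"
    with assms(2) have "A \<subseteq> S" by blast
    then show "\<exists>F. countable F \<and> F \<subseteq> H \<and> A = \<Union>F"
      by (rule countable_Union_if_CC_subset[OF incl E \<open>A \<in> T\<close>])
  qed
next
  interpret semiring_of_sets S H by (rule assms(4))
  assume cover: "\<forall>A\<in>T. \<exists>F. countable F \<and> F \<subseteq> H \<and> A = \<Union>F"
  show "CC S T \<subseteq> CC S H"
  proof (rule CC_subset_if_measurable)
    fix A assume "A \<in> T"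
    from bspec[OF cover this] obtain F where "countable F \<and> F \<subseteq> H \<and> A = \<Union>F" ..
    then show "Ncount A \<in> count_measure S H \<rightarrow>\<^sub>M count_space UNIV"
      using measurable_Ncount_countable_Union by simp
  qed
qed

end
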